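(* Let $f$ be a tournament solution that is TS-Condorcet consistent. Then $f$-Approval is monotonic if and only if $f$ satisfies both the TS-exclusive monotonicity criterion and the TS-exclusive negative monotonicity (ENM) criterion.
   Context: A tournament $T=(V(T),\succ)$ is a finite set of candidates with an asymmetric and complete binary relation $\succ$. $N^+_T(c)=\{b: c\succ b\}$ is the set of outneighbors of $c$; $T[B]$ is the subtournament induced by $B\subseteq V(T)$. The source (Condorcet winner) of $T$ is a candidate $a$ with $a\succ b$ for all $b\neq a$. A tournament solution $f$ maps every tournament $T$ to a nonempty subset $f(T)\subseteq V(T)$. An election $\mathcal{E}=(\mathcal{C},\mathcal{T})$ consists of a finite candidate set $\mathcal{C}$ and a finite list $\mathcal{T}$ of votes, each a tournament on $\mathcal{C}$. $f$-Approval gives each candidate $c$ the score $|\{T\in\mathcal{T}: c\in f(T)\}|$ (with multiplicity) and its winners are the candidates of highest score. Say a pair of tournaments $T=(\mathcal{C},\succ)$, $T'=(\mathcal{C},\succ')$ is a $c$-improvement (for $c\in\mathcal{C}$) if $T[\mathcal{C}\setminus\{c\}]=T'[\mathcal{C}\setminus\{c\}]$ and $N^+_T(c)\subseteq N^+_{T'}(c)$. - $f$ is TS-Condorcet consistent if $f(T)=\{w\}$ whenever $T$ has a source $w$. - $f$ is TS-exclusive monotonic if for every $c$-improvement $(T,T')$ with $c\in f(T)$, we have $c\in f(T')$ and $f(T')\subseteq f(T)$. - $f$ satisfies TS-ENM if for every $c$-improvement $(T,T')$ with $c\notin f(T)$, $f(T')\not\subseteq f(T)$ implies $c\in f(T')$.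 - A voting correspondence $\varphi$ is monotonic if for every two elections $\mathcal{E}=(\mathcal{C},(T_1,\dots,T_n))$, $\mathcal{E}'=(\mathcal{C},(T_1',\dots,T_n'))$ and every $c\in\varphi(\mathcal{E})$ such that $(T_i,T_i')$ is a $c$-improvement for every $i$, it holds that $c\in\varphi(\mathcal{E}')$. *)

theory Defs
  imports Main
begin

text \<open>A tournament on the candidate set C: an asymmetric, complete relation on a finite
  nonempty set C (pairs (x,y) in R mean x beats y); R contains only pairs of candidates.\<close>
definition tournament :: "'a set \<Rightarrow> 'a rel \<Rightarrow> bool" where
  "tournament C R \<longleftrightarrow> finite C \<and> C \<noteq> {} \<and> R \<subseteq> C \<times> C \<and>
     (\<forall>x y. (x, y) \<in> R \<longrightarrow> (y, x) \<notin> R) \<and>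
     (\<forall>x\<in>C. \<forall>y\<in>C. x \<noteq> y \<longrightarrow> (x, y) \<in> R \<or> (y, x) \<in> R)"

definition outnbrs :: "'a rel \<Rightarrow> 'a \<Rightarrow> 'a set" where
  "outnbrs R c = {b. (c, b) \<in> R}"

definition restr :: "'a rel \<Rightarrow> 'a set \<Rightarrow> 'a rel" where
  "restr R B = R \<inter> (B \<times> B)"

definition is_source :: "'a set \<Rightarrow> 'a rel \<Rightarrow> 'a \<Rightarrow> bool" where
  "is_source C R w \<longleftrightarrow> w \<in> C \<and> (\<forall>b\<in>C. b \<noteq> w \<longrightarrow> (w, b) \<in> R)"

definition tournament_solution :: "('a set \<Rightarrow> 'a rel \<Rightarrow> 'a set) \<Rightarrow> bool" where
  "tournament_solution f \<longleftrightarrow>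
     (\<forall>C R. tournament C R \<longrightarrow> f C R \<noteq> {} \<and> f C R \<subseteq> C)"

definition c_improvement :: "'a set \<Rightarrow> 'a \<Rightarrow> 'a rel \<Rightarrow> 'a rel \<Rightarrow> bool" where
  "c_improvement C c R R' \<longleftrightarrow> tournament C R \<and> tournament C R' \<and> c \<in> C \<and>
     restr R (C - {c}) = restr R' (C - {c}) \<and> outnbrs R c \<subseteq> outnbrs R' c"

definition ts_condorcet :: "('a set \<Rightarrow> 'a rel \<Rightarrow> 'a set) \<Rightarrow> bool" where
  "ts_condorcet f \<longleftrightarrow>
     (\<forall>C R w. tournament C R \<longrightarrow> is_source C R w \<longrightarrow> f C R = {w})"

definition ts_exclusive_monotonic :: "('a set \<Rightarrow> 'a rel \<Rightarrow> 'a set) \<Rightarrow> bool" where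
  "ts_exclusive_monotonic f \<longleftrightarrow>
     (\<forall>C c R R'. c_improvement C c R R' \<longrightarrow> c \<in> f C R \<longrightarrow>
        c \<in> f C R' \<and> f C R' \<subseteq> f C R)"

definition ts_enm :: "('a set \<Rightarrow> 'a rel \<Rightarrow> 'a set) \<Rightarrow> bool" where
  "ts_enm f \<longleftrightarrow>
     (\<forall>C c R R'. c_improvement C c R R' \<longrightarrow> c \<notin> f C R \<longrightarrow>
        \<not> (f C R' \<subseteq> f C R) \<longrightarrow> c \<in> f C R')"

definition election :: "'a set \<Rightarrow> 'a rel list \<Rightarrow> bool" where
  "election C Ts \<longleftrightarrow> finite C \<and> C \<noteq> {} \<and> (\<forall>T\<in>set Ts. tournament C T)"

definition approval_score ::
  "('a set \<Rightarrow> 'a rel \<Rightarrow> 'a set) \<Rightarrow> 'a set \<Rightarrow> 'a rel list \<Rightarrow> 'a \<Rightarrow> nat" where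
  "approval_score f C Ts c = length (filter (\<lambda>T. c \<in> f C T) Ts)"

definition approval_winners ::
  "('a set \<Rightarrow> 'a rel \<Rightarrow> 'a set) \<Rightarrow> 'a set \<Rightarrow> 'a rel list \<Rightarrow> 'a set" where
  "approval_winners f C Ts =
     {c \<in> C. \<forall>d\<in>C. approval_score f C Ts d \<le> approval_score f C Ts c}"

definition approval_monotonic :: "('a set \<Rightarrow> 'a rel \<Rightarrow> 'a set) \<Rightarrow> bool" where
  "approval_monotonic f \<longleftrightarrow>
     (\<forall>C Ts Ts' c. election C Ts \<longrightarrow> election C Ts' \<longrightarrow> length Ts = length Ts' \<longrightarrow>
        c \<in> approval_winners f C Ts \<longrightarrow>
        (\<forall>i < length Ts. c_improvement C c (Ts ! i) (Ts' ! i)) \<longrightarrow>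
        c \<in> approval_winners f C Ts')"

end

theory Submission
  imports Defs
begin

text \<open>Sufficiency: by exclusive monotonicity and ENM, in every single vote of a c-improvement no
  candidate gains more approval than c, so summing over the votes c stays a winner.
  Necessity: padding a one-vote improvement with votes that have a prescribed Condorcet winner
  (whose approval set is a singleton by Condorcet consistency) turns any violation of exclusive
  monotonicity or ENM into an election where a winning c loses after improving.\<close>

definition make_source :: "'a \<Rightarrow> 'a set \<Rightarrow> 'a rel \<Rightarrow> 'a rel" where
  "make_source d C R = {(x, y) \<in> R. x \<noteq> d \<and> y \<noteq> d} \<union> {(d, y) |y. y \<in> C \<and> y \<noteq> d}"

lemma tournament_make_source:
  assumes "tournament C R" "d \<in> C"
  shows "tournament C (make_source d C R)"
  using assms unfolding tournament_def make_source_def by blast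

lemma is_source_make_source:
  assumes "d \<in> C"
  shows "is_source C (make_source d C R) d"
  using assms unfolding is_source_def make_source_def by blast

lemma ts_condorcet_make_source:
  assumes "ts_condorcet f" "tournament C R" "d \<in> C"
  shows "f C (make_source d C R) = {d}"
  using assms(1) tournament_make_source[OF assms(2,3)] is_source_make_source[OF assms(3)]
  unfolding ts_condorcet_def by blast

lemma c_improvement_refl:
  assumes "tournament C R" "c \<in> C"
  shows "c_improvement C c R R"
  using assms unfolding c_improvement_def by auto

lemma approval_score_Nil [simp]: "approval_score f C [] x = 0"
  by (simp add: approval_score_def)

lemma approval_score_Cons [simp]:
  "approval_score f C (T # Ts) x = of_bool (x \<in> f C T) + approval_score f C Ts x"
  by (simp add: approval_score_def)

lemma approval_score_gain_le:
  assumes "list_all2 P Ts Ts'"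
    and "\<And>T T'. P T T' \<Longrightarrow>
      of_bool (d \<in> f C T') + of_bool (c \<in> f C T) \<le> of_bool (d \<in> f C T) + (of_bool (c \<in> f C T') :: nat)"
  shows "approval_score f C Ts' d + approval_score f C Ts c
           \<le> approval_score f C Ts d + approval_score f C Ts' c"
  using assms(1)
proof (induction rule: list_all2_induct)
  case Nil
  then show ?case by simp
next
  case (Cons T Ts T' Ts')
  with assms(2)[OF Cons.hyps(1)] show ?case by simp
qed

lemma improvement_gain_le:
  assumes "ts_exclusive_monotonic f" "ts_enm f" "c_improvement C c T T'"
  shows "of_bool (d \<in> f C T') + of_bool (c \<in> f C T) \<le> of_bool (d \<in> f C T) + (of_bool (c \<in> f C T') :: nat)"
proof (cases "c \<in> f C T")
  case True
  then have "c \<in> f C T'" "f C T' \<subseteq> f C T"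
    using assms(1,3) unfolding ts_exclusive_monotonic_def by blast+
  with True show ?thesis by auto
next
  case False
  then have "f C T' \<subseteq> f C T \<or> c \<in> f C T'"
    using assms(2,3) unfolding ts_enm_def by blast
  with False show ?thesis by auto
qed

lemma approval_monotonic_if_exclusive_monotonic_enm:
  assumes "ts_exclusive_monotonic f" "ts_enm f"
  shows "approval_monotonic f"
  unfolding approval_monotonic_def
proof (intro allI impI)
  fix C Ts Ts' c
  assume len: "length Ts = length Ts'"
    and win: "c \<in> approval_winners f C Ts"
    and imp: "\<forall>i < length Ts. c_improvement C c (Ts ! i) (Ts' ! i)"
  have "approval_score f C Ts' d \<le> approval_score f C Ts' c" if "d \<in> C" for d
  proof -
    have "list_all2 (c_improvement C c) Ts Ts'"
      using len imp by (simp add: list_all2_conv_all_nth)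
    then have "approval_score f C Ts' d + approval_score f C Ts c
           \<le> approval_score f C Ts d + approval_score f C Ts' c"
      by (rule approval_score_gain_le) (rule improvement_gain_le[OF assms])
    moreover have "approval_score f C Ts d \<le> approval_score f C Ts c"
      using win that unfolding approval_winners_def by blast
    ultimately show ?thesis by linarith
  qed
  with win show "c \<in> approval_winners f C Ts'"
    unfolding approval_winners_def by blast
qed

lemma approval_monotonic_Cons:
  assumes "approval_monotonic f" "c_improvement C c R R'" "\<forall>T \<in> set Ts. tournament C T"
    and "c \<in> approval_winners f C (R # Ts)"
  shows "c \<in> approval_winners f C (R' # Ts)"
proof -
  have tR: "tournament C R" "tournament C R'" and cC: "c \<in> C"
    using assms(2) unfolding c_improvement_def by auto
  then have "election C (R # Ts)" "election C (R' # Ts)"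
    using assms(3) unfolding election_def tournament_def by auto
  moreover have "c_improvement C c ((R # Ts) ! i) ((R' # Ts) ! i)" if "i < length (R # Ts)" for i
    using that assms(2,3) c_improvement_refl[OF _ cC] by (cases i) auto
  ultimately show ?thesis
    using assms(1,4) unfolding approval_monotonic_def by (metis length_Cons)
qed

lemma approval_monotonic_keeps_member:
  assumes "approval_monotonic f" "tournament_solution f"
    and imp: "c_improvement C c R R'" and "c \<in> f C R"
  shows "c \<in> f C R'"
proof -
  have "tournament C R'" and cC: "c \<in> C"
    using imp unfolding c_improvement_def by auto
  then obtain d where d: "d \<in> f C R'" "d \<in> C"
    using assms(2) unfolding tournament_solution_def by blast
  have "c \<in> approval_winners f C [R]"
    using assms(4) cC unfolding approval_winners_def by simp
  then have "c \<in> approval_winners f C [R']"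
    using approval_monotonic_Cons[OF assms(1) imp] by simp
  with d show ?thesis
    unfolding approval_winners_def by fastforce
qed

text \<open>The extra votes have Condorcet winner d if c stays approved, and Condorcet winners c and d
  if c stays unapproved: either way c ties d before the improvement and d beats c after it.\<close>

lemma approval_monotonic_gain_forces_gain:
  assumes am: "approval_monotonic f" "tournament_solution f" "ts_condorcet f"
    and imp: "c_improvement C c R R'" and d: "d \<in> f C R'" "d \<notin> f C R"
  shows "c \<notin> f C R \<and> c \<in> f C R'"
proof (rule ccontr)
  assume "\<not> (c \<notin> f C R \<and> c \<in> f C R')"
  then consider "c \<in> f C R" "c \<in> f C R'" | "c \<notin> f C R" "c \<notin> f C R'"
    using approval_monotonic_keeps_member[OF am(1,2) imp] by blast
  note c_status = this
  have tR: "tournament C R" "tournament C R'" and cC: "c \<in> C"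
    using imp unfolding c_improvement_def by auto
  have dC: "d \<in> C" and "d \<noteq> c"
    using d assms(2) tR(2) c_status unfolding tournament_solution_def by blast+
  define Sc Sd where "Sc = make_source c C R" and "Sd = make_source d C R"
  have tS: "tournament C Sc" "tournament C Sd"
    unfolding Sc_def Sd_def using tR(1) cC dC by (simp_all add: tournament_make_source)
  have fS: "f C Sc = {c}" "f C Sd = {d}"
    unfolding Sc_def Sd_def using am(3) tR(1) cC dC by (simp_all add: ts_condorcet_make_source)
  from c_status obtain Ts where Ts: "Ts = [Sd] \<or> Ts = [Sc, Sd]"
    and win: "c \<in> approval_winners f C (R # Ts)"
    and lose: "approval_score f C (R' # Ts) c < approval_score f C (R' # Ts) d"
  proof cases
    case 1
    then show thesis
      using that[of "[Sd]"] d \<open>d \<noteq> c\<close> fS cC unfolding approval_winners_def by auto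
  next
    case 2
    then show thesis
      using that[of "[Sc, Sd]"] d \<open>d \<noteq> c\<close> fS cC unfolding approval_winners_def by auto
  qed
  have "c \<in> approval_winners f C (R' # Ts)"
    using approval_monotonic_Cons[OF am(1) imp _ win] Ts tS by auto
  with lose dC show False
    unfolding approval_winners_def by fastforce
qed

theorem theorem2:
  fixes f :: "'a set \<Rightarrow> 'a rel \<Rightarrow> 'a set"
  assumes "tournament_solution f"
    and "ts_condorcet f"
  shows "approval_monotonic f \<longleftrightarrow> ts_exclusive_monotonic f \<and> ts_enm f"
proof
  assume am: "approval_monotonic f"
  note keeps = approval_monotonic_keeps_member[OF am assms(1)]
  note gain = approval_monotonic_gain_forces_gain[OF am assms]
  show "ts_exclusive_monotonic f \<and> ts_enm f"
    unfolding ts_exclusive_monotonic_def ts_enm_def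
    using keeps gain by blast
next
  assume "ts_exclusive_monotonic f \<and> ts_enm f"
  then show "approval_monotonic f"
    by (intro approval_monotonic_if_exclusive_monotonic_enm) auto
qed

end
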